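(* Let $n>0$, $X\sim N(\theta,\frac1n)$ and $\tau\ge1$. Set $\mu_0=E_0\{(X^2-\frac{\tau}{n})_+\}$, where the expectation is taken under $\theta=0$, and let $\hat Q=(X^2-\frac{\tau}{n})_+-\mu_0$. Then $$|\mu_0|\le\frac{4}{\sqrt{2\pi}\,n\,\tau^{1/2}e^{\tau/2}},\qquad |E_\theta\hat Q-\theta^2|\le\min\Big(\frac{2\tau}{n},\theta^2\Big),$$ and $$\mathrm{Var}(\hat Q)\le\frac{6\theta^2}{n}+\frac{4\tau^{1/2}+18}{n^2e^{\tau/2}}.$$
   Context: $(x)_+=\max(x,0)$. *)

theory Defs
  imports "HOL-Probability.Probability"
begin

definition normal_law :: "real \<Rightarrow> real \<Rightarrow> real measure" where
  "normal_law \<theta> n = density lborel (normal_density \<theta> (1 / sqrt n))"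

definition pos_part :: "real \<Rightarrow> real" where
  "pos_part x = max x 0"

end

theory Submission
  imports Defs "HOL-Real_Asymp.Real_Asymp"
begin

text \<open>
  Write \<open>X = \<theta> + Z / sqrt n\<close> with \<open>Z\<close> standard normal, \<open>a = \<theta> sqrt n\<close> and
  \<open>t = sqrt \<tau>\<close>. Then \<open>n (X\<^sup>2 - \<tau>/n)\<^sub>+ = F (a + Z)\<close> with \<open>F y = (y\<^sup>2 - t\<^sup>2)\<^sub>+\<close>,
  so everything reduces to unit variance, and \<open>n \<mu>0 = E F Z\<close> is bounded by a Mills-ratio
  estimate. For the bias, \<open>F y = y\<^sup>2 - G y\<close> with \<open>G y = min (y\<^sup>2) (t\<^sup>2)\<close>, so
  \<open>E F (a+Z) - E F Z - a\<^sup>2 = E G Z - E G (a+Z)\<close>. Anderson's inequality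
  \<open>E H Z \<le> E H (a+Z)\<close> for \<open>H\<close> nondecreasing in \<open>\<bar>y\<bar>\<close>, applied to \<open>G\<close> and to \<open>F\<close>,
  puts this between \<open>-min (a\<^sup>2) (t\<^sup>2)\<close> and \<open>0\<close>.
  The variance is at most \<open>E (F (a+Z) - c)\<^sup>2\<close> for every \<open>c\<close>. If \<open>a\<close> is large or \<open>t\<close>
  is small take \<open>c = F a\<close>: as \<open>F\<close> is 1-Lipschitz as a function of \<open>y\<^sup>2\<close>, this gives
  \<open>4 a\<^sup>2 + 3\<close>. Otherwise take \<open>c = 0\<close> and bound the Gaussian tails of \<open>F (a+Z)\<^sup>2\<close> by
  exponential tilting.
\<close>

abbreviation \<phi> :: "real \<Rightarrow> real" where "\<phi> \<equiv> std_normal_density"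

lemma integrable_std_normal_mult_quartic_bounded:
  fixes f :: "real \<Rightarrow> real"
  assumes [measurable]: "f \<in> borel_measurable borel" and bound: "\<And>z. \<bar>f z\<bar> \<le> A + B * z^4"
  shows "integrable lborel (\<lambda>z. \<phi> z * f z)"
proof (rule Bochner_Integration.integrable_bound)
  show "integrable lborel (\<lambda>z. A * (\<phi> z * z^0) + B * (\<phi> z * z^4))"
    using integrable_std_normal_moment[of 0] integrable_std_normal_moment[of 4] by auto
  show "AE z in lborel. norm (\<phi> z * f z) \<le> norm (A * (\<phi> z * z^0) + B * (\<phi> z * z^4))"
  proof (intro AE_I2)
    fix z
    have "norm (\<phi> z * f z) \<le> \<phi> z * (A + B * z^4)"
      using bound[of z] by (simp add: abs_mult mult_left_mono)
    also have "\<dots> = norm (A * (\<phi> z * z^0) + B * (\<phi> z * z^4))"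
    proof -
      have "0 \<le> \<phi> z * (A + B * z^4)"
        using order_trans[OF abs_ge_zero bound[of z]] by simp
      then show ?thesis by (simp add: algebra_simps)
    qed
    finally show "norm (\<phi> z * f z) \<le> norm (A * (\<phi> z * z^0) + B * (\<phi> z * z^4))" .
  qed
qed simp

lemma integral_normal_density_shift:
  "(\<integral>y. normal_density b 1 y * H y \<partial>lborel) = (\<integral>z. \<phi> z * H (b + z) \<partial>lborel)"
  using lborel_integral_real_affine[of 1 "\<lambda>y. normal_density b 1 y * H y" b]
  by (simp add: normal_density_def)

lemma integrable_normal_density_shift_iff:
  "integrable lborel (\<lambda>y. normal_density b 1 y * H y) \<longleftrightarrow> integrable lborel (\<lambda>z. \<phi> z * H (b + z))"
  using lborel_integrable_real_affine_iff[of 1 "\<lambda>y. normal_density b 1 y * H y" b]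
  by (simp add: normal_density_def)

lemma integral_lborel_reflect: "(\<integral>y. f y \<partial>lborel) = (\<integral>y. f (- y) \<partial>lborel)" for f :: "real \<Rightarrow> real"
  using lborel_integral_real_affine[of "-1" f 0] by simp

lemma integrable_lborel_reflect_iff: "integrable lborel f \<longleftrightarrow> integrable lborel (\<lambda>y. f (- y))"
  for f :: "real \<Rightarrow> real"
  using lborel_integrable_real_affine_iff[of "-1" f 0] by simp

lemma normal_density_uminus: "normal_density (- a) \<sigma> (- y) = normal_density a \<sigma> y"
  by (simp add: normal_density_def power2_commute)

lemma has_bochner_integral_std_normal_shift_square:
  "has_bochner_integral lborel (\<lambda>z. \<phi> z * (b + z)^2) (b^2 + 1)"
proof -
  have "has_bochner_integral lborel
      (\<lambda>z. b^2 * (\<phi> z * z^(2*0)) + (2*b) * (\<phi> z * z^(2*0+1)) + \<phi> z * z^(2*1))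
      (b^2 * (fact (2*0) / (2^0 * fact 0)) + (2*b) * 0 + fact (2*1) / (2^1 * fact 1))"
    by (intro has_bochner_integral_add has_bochner_integral_mult_right
        std_normal_moment_even std_normal_moment_odd)
  then show ?thesis
    by (simp add: power2_eq_square algebra_simps)
qed

lemma has_bochner_integral_std_normal_shift_square_diff:
  "has_bochner_integral lborel (\<lambda>z. \<phi> z * ((a + z)^2 - a^2)^2) (4 * a^2 + 3)"
proof -
  have "has_bochner_integral lborel
      (\<lambda>z. (4*a^2) * (\<phi> z * z^(2*1)) + (4*a) * (\<phi> z * z^(2*1+1)) + \<phi> z * z^(2*2))
      ((4*a^2) * (fact (2*1) / (2^1 * fact 1)) + (4*a) * 0 + fact (2*2) / (2^2 * fact 2))"
    by (intro has_bochner_integral_add has_bochner_integral_mult_right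
        std_normal_moment_even std_normal_moment_odd)
  then show ?thesis
    by (simp add: power2_eq_square power4_eq_xxxx algebra_simps fact_numeral)
qed

lemma mean_square_about_mean_le:
  fixes p X :: "'a \<Rightarrow> real"
  assumes p: "has_bochner_integral M p 1"
    and int_X: "integrable M (\<lambda>z. p z * X z)"
    and int_sq: "\<And>c. integrable M (\<lambda>z. p z * (X z - c)^2)"
  shows "(\<integral>z. p z * (X z - (\<integral>y. p y * X y \<partial>M))^2 \<partial>M) \<le> (\<integral>z. p z * (X z - c)^2 \<partial>M)"
proof -
  define m where "m = (\<integral>y. p y * X y \<partial>M)"
  have int_p: "integrable M p" and "integral\<^sup>L M p = 1"
    using p by (auto simp: has_bochner_integral_iff)
  have "(\<integral>z. p z * (X z - c)^2 \<partial>M)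
      = (\<integral>z. p z * (X z - m)^2 + (2 * (m - c) * (p z * X z) - (2 * (m - c) * m) * p z + (m - c)^2 * p z) \<partial>M)"
    by (intro Bochner_Integration.integral_cong) (auto simp: power2_eq_square algebra_simps)
  also have "\<dots> = (\<integral>z. p z * (X z - m)^2 \<partial>M) + (m - c)^2"
    using int_sq[of m] int_X int_p \<open>integral\<^sup>L M p = 1\<close> by (simp add: m_def)
  finally show ?thesis
    unfolding m_def by simp
qed

lemma has_bochner_integral_FTC_atLeast:
  fixes f F :: "real \<Rightarrow> real"
  assumes f_borel[measurable]: "f \<in> borel_measurable borel"
    and F: "\<And>x. a \<le> x \<Longrightarrow> (F has_real_derivative f x) (at x)"
    and nonneg: "\<And>x. a \<le> x \<Longrightarrow> 0 \<le> f x"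
    and lim: "(F \<longlongrightarrow> T) at_top"
  shows "has_bochner_integral lborel (\<lambda>x. indicator {a..} x * f x) (T - F a)"
proof -
  have "F x \<le> F y" if "a \<le> x" "x \<le> y" for x y
    using F nonneg that by (intro DERIV_nonneg_imp_nondecreasing[of x y F]) (auto intro: order_trans)
  then have "F a \<le> T"
    by (intro tendsto_lowerbound[OF lim]) (auto simp: eventually_at_top_linorder)
  have "(\<integral>\<^sup>+x. ennreal (indicator {a..} x * f x) \<partial>lborel) = (\<integral>\<^sup>+x. ennreal (f x) * indicator {a..} x \<partial>lborel)"
    by (intro nn_integral_cong) (auto split: split_indicator)
  also have "\<dots> = ennreal (T - F a)"
    by (rule nn_integral_FTC_atLeast[OF f_borel F nonneg lim])
  finally show ?thesis
    by (intro has_bochner_integral_nn_integral) (auto simp: \<open>F a \<le> T\<close> nonneg split: split_indicator)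
qed

lemma integral_le_two_tails:
  fixes f k l :: "real \<Rightarrow> real"
  assumes int_f: "integrable lborel f"
    and k: "has_bochner_integral lborel (\<lambda>y. indicator {t..} y * k y) I"
    and l: "has_bochner_integral lborel (\<lambda>y. indicator {t..} y * l y) J"
    and k_nonneg: "\<And>y. t \<le> y \<Longrightarrow> 0 \<le> k y" and l_nonneg: "\<And>y. t \<le> y \<Longrightarrow> 0 \<le> l y"
    and right: "\<And>y. t \<le> y \<Longrightarrow> f y \<le> k y" and left: "\<And>y. t \<le> y \<Longrightarrow> f (- y) \<le> l y"
    and middle: "\<And>y. \<bar>y\<bar> < t \<Longrightarrow> f y \<le> 0"
  shows "integral\<^sup>L lborel f \<le> I + J"
proof -
  define K where "K = (\<lambda>y. indicator {t..} y * k y)"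
  define L where "L = (\<lambda>y. indicator {t..} y * l y)"
  have K0: "0 \<le> K y" and L0: "0 \<le> L y" for y
    using k_nonneg l_nonneg by (auto simp: K_def L_def split: split_indicator)
  have "integrable lborel L"
    using l by (simp add: L_def has_bochner_integral_iff)
  then have int_L: "integrable lborel (\<lambda>y. L (- y))"
    using integrable_lborel_reflect_iff by blast
  have "f y \<le> K y + L (- y)" for y
  proof -
    consider "t \<le> y" | "t \<le> - y" | "\<bar>y\<bar> < t" by linarith
    then show ?thesis
    proof cases
      case 1
      then show ?thesis using right[of y] L0[of "- y"] by (simp add: K_def)
    next
      case 2
      then show ?thesis using left[of "- y"] K0[of y] by (simp add: L_def)
    next
      case 3
      then show ?thesis using middle[of y] K0[of y] L0[of "- y"] by simp
    qed
  qed
  then have "integral\<^sup>L lborel f \<le> (\<integral>y. K y + L (- y) \<partial>lborel)"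
    using k int_L by (intro integral_mono[OF int_f]) (auto simp: K_def has_bochner_integral_iff)
  also have "\<dots> = I + J"
    using k l int_L integral_lborel_reflect[of L]
    by (simp add: K_def L_def has_bochner_integral_iff)
  finally show ?thesis .
qed

section \<open>Anderson's inequality on the line\<close>

lemma normal_density_shift_sum_eq:
  "normal_density a 1 y + normal_density (- a) 1 y - 2 * normal_density 0 1 y
     = 2 * \<phi> y * (exp (- (a^2) / 2) * cosh (a * y) - 1)"
proof -
  have expand: "normal_density b 1 y = \<phi> y * exp (- (b^2) / 2) * exp (b * y)" for b
  proof -
    have "exp (- ((y - b)^2) / 2) = exp (- (y^2) / 2 + (- (b^2) / 2 + b * y))"
      by (simp add: power2_eq_square field_simps)
    then show ?thesis
      unfolding exp_add by (simp add: normal_density_def std_normal_density_def mult.assoc)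
  qed
  show ?thesis
    using expand[of a] expand[of "- a"] by (simp add: cosh_def algebra_simps)
qed

text \<open>
  The combination above changes sign exactly once in \<open>\<bar>y\<bar>\<close>, at \<open>y0\<close> with
  \<open>cosh (\<bar>a\<bar> y0) = exp (a\<^sup>2 / 2)\<close>; hence \<open>c = H y0\<close> works.
\<close>
lemma normal_density_shift_sum_sign:
  fixes H :: "real \<Rightarrow> real"
  assumes mono: "\<And>y y'. \<bar>y\<bar> \<le> \<bar>y'\<bar> \<Longrightarrow> H y \<le> H y'"
  shows "\<exists>c. \<forall>y. 0 \<le> (H y - c) * (normal_density a 1 y + normal_density (- a) 1 y - 2 * normal_density 0 1 y)"
proof (cases "a = 0")
  case True
  then show ?thesis by simp
next
  case False
  define K where "K = exp (a^2 / 2)"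
  define y0 where "y0 = arcosh K / \<bar>a\<bar>"
  have "1 \<le> K" unfolding K_def by simp
  then have "0 \<le> y0" and cosh_y0: "cosh (\<bar>a\<bar> * y0) = K"
    using False by (simp_all add: y0_def)
  have sign: "0 \<le> exp (- (a^2) / 2) * cosh (a * y) - 1 \<longleftrightarrow> y0 \<le> \<bar>y\<bar>" for y
  proof -
    have cosh_abs: "cosh (a * y) = cosh (\<bar>a\<bar> * \<bar>y\<bar>)"
      by (metis abs_mult cosh_real_abs)
    have "0 \<le> exp (- (a^2) / 2) * cosh (a * y) - 1 \<longleftrightarrow> K \<le> cosh (\<bar>a\<bar> * \<bar>y\<bar>)"
      unfolding K_def cosh_abs by (simp add: exp_minus field_simps)
    also have "\<dots> \<longleftrightarrow> \<bar>a\<bar> * y0 \<le> \<bar>a\<bar> * \<bar>y\<bar>"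
      using cosh_y0 cosh_real_nonneg_le_iff[of "\<bar>a\<bar> * y0" "\<bar>a\<bar> * \<bar>y\<bar>"] \<open>0 \<le> y0\<close> by simp
    also have "\<dots> \<longleftrightarrow> y0 \<le> \<bar>y\<bar>"
      using False by simp
    finally show ?thesis .
  qed
  show ?thesis
  proof (intro exI allI)
    fix y
    show "0 \<le> (H y - H y0) * (normal_density a 1 y + normal_density (- a) 1 y - 2 * normal_density 0 1 y)"
    proof (cases "y0 \<le> \<bar>y\<bar>")
      case True
      then have "H y0 \<le> H y" and "0 \<le> exp (- (a^2) / 2) * cosh (a * y) - 1"
        using mono[of y0 y] \<open>0 \<le> y0\<close> sign[of y] by simp_all
      then show ?thesis
        unfolding normal_density_shift_sum_eq by simp
    next
      case False
      then have "H y \<le> H y0" and "exp (- (a^2) / 2) * cosh (a * y) - 1 \<le> 0"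
        using mono[of y y0] \<open>0 \<le> y0\<close> sign[of y] by simp_all
      then show ?thesis
        unfolding normal_density_shift_sum_eq
        by (intro mult_nonpos_nonpos) (auto intro: mult_nonneg_nonpos)
    qed
  qed
qed

lemma std_normal_integral_le_shift:
  fixes H :: "real \<Rightarrow> real"
  assumes [measurable]: "H \<in> borel_measurable borel"
    and mono: "\<And>y y'. \<bar>y\<bar> \<le> \<bar>y'\<bar> \<Longrightarrow> H y \<le> H y'"
    and int: "\<And>b. integrable lborel (\<lambda>z. \<phi> z * H (b + z))"
  shows "(\<integral>z. \<phi> z * H z \<partial>lborel) \<le> (\<integral>z. \<phi> z * H (a + z) \<partial>lborel)"
proof -
  define N where "N = (\<lambda>b y. normal_density b 1 y)"
  define I where "I = (\<lambda>b. \<integral>y. N b y * H y \<partial>lborel)"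
  have I: "has_bochner_integral lborel (\<lambda>y. N b y * H y) (I b)" for b
    using int[of b] integrable_normal_density_shift_iff[of b H]
    by (simp add: I_def N_def has_bochner_integral_iff)
  have N: "has_bochner_integral lborel (N b) 1" for b
    using has_bochner_integral_integrable[of lborel "normal_density b 1"] by (simp add: N_def)
  have I_std: "I b = (\<integral>z. \<phi> z * H (b + z) \<partial>lborel)" for b
    unfolding I_def N_def by (rule integral_normal_density_shift)
  have "H (- y) = H y" for y
    using mono[of y "- y"] mono[of "- y" y] by simp
  then have I_uminus: "I (- a) = I a"
    using integral_lborel_reflect[of "\<lambda>y. N (- a) y * H y"]
    by (simp add: I_def N_def normal_density_uminus)
  obtain c where c: "\<And>y. 0 \<le> (H y - c) * (N a y + N (- a) y - 2 * N 0 y)"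
    using normal_density_shift_sum_sign[of H a, OF mono] unfolding N_def by blast
  have "has_bochner_integral lborel
      (\<lambda>y. (N a y * H y + N (- a) y * H y - 2 * (N 0 y * H y)) - (c * N a y + c * N (- a) y - 2 * (c * N 0 y)))
      ((I a + I (- a) - 2 * I 0) - (c * 1 + c * 1 - 2 * (c * 1)))"
    by (intro has_bochner_integral_diff has_bochner_integral_add has_bochner_integral_mult_right I N)
  then have "has_bochner_integral lborel
      (\<lambda>y. (H y - c) * (N a y + N (- a) y - 2 * N 0 y)) (I a + I (- a) - 2 * I 0)"
    by (rule has_bochner_integral_cong[THEN iffD1, rotated -1]) (simp_all add: algebra_simps)
  then have "I a + I (- a) - 2 * I 0 = (\<integral>y. (H y - c) * (N a y + N (- a) y - 2 * N 0 y) \<partial>lborel)"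
    by (rule has_bochner_integral_integral_eq[symmetric])
  moreover have "0 \<le> (\<integral>y. (H y - c) * (N a y + N (- a) y - 2 * N 0 y) \<partial>lborel)"
    using c by (simp add: Bochner_Integration.integral_nonneg)
  ultimately have "0 \<le> I a + I (- a) - 2 * I 0" by simp
  then show ?thesis
    using I_uminus I_std[of 0] I_std[of a] by simp
qed

lemma borel_measurable_pos_part [measurable]: "pos_part \<in> borel_measurable borel"
  unfolding pos_part_def[abs_def] by measurable

lemma abs_pos_part_diff_le: "\<bar>pos_part u - pos_part v\<bar> \<le> \<bar>u - v\<bar>"
  unfolding pos_part_def by auto

lemma pos_part_divide: "0 < n \<Longrightarrow> pos_part (u / n) = pos_part u / n"
  unfolding pos_part_def by (auto simp: max_def field_simps)

definition sq_excess :: "real \<Rightarrow> real \<Rightarrow> real" where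
  "sq_excess t y = pos_part (y^2 - t^2)"

definition sq_capped :: "real \<Rightarrow> real \<Rightarrow> real" where
  "sq_capped t y = min (y^2) (t^2)"

lemma borel_measurable_sq_excess [measurable]: "sq_excess t \<in> borel_measurable borel"
  unfolding sq_excess_def[abs_def] by measurable

lemma borel_measurable_sq_capped [measurable]: "sq_capped t \<in> borel_measurable borel"
  unfolding sq_capped_def[abs_def] by measurable

lemma sq_excess_eq_sq_minus_capped: "sq_excess t y = y^2 - sq_capped t y"
  unfolding sq_excess_def sq_capped_def pos_part_def by auto

lemma sq_excess_nonneg: "0 \<le> sq_excess t y"
  unfolding sq_excess_def pos_part_def by auto

lemma sq_excess_le: "sq_excess t y \<le> y^2"
  unfolding sq_excess_def pos_part_def by auto

lemma sq_excess_eq_zero: "\<bar>y\<bar> < \<bar>t\<bar> \<Longrightarrow> sq_excess t y = 0"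
  using abs_le_square_iff[of t y] unfolding sq_excess_def pos_part_def by auto

lemma sq_excess_eq: "\<bar>t\<bar> \<le> \<bar>y\<bar> \<Longrightarrow> sq_excess t y = y^2 - t^2"
  unfolding sq_excess_def pos_part_def by (simp add: abs_le_square_iff)

lemma sq_excess_uminus: "sq_excess t (- y) = sq_excess t y"
  unfolding sq_excess_def by simp

lemma sq_excess_mono: "\<bar>y\<bar> \<le> \<bar>y'\<bar> \<Longrightarrow> sq_excess t y \<le> sq_excess t y'"
  unfolding sq_excess_def pos_part_def by (simp add: abs_le_square_iff)

lemma sq_capped_bounds: "0 \<le> sq_capped t y" "sq_capped t y \<le> t^2"
  unfolding sq_capped_def by auto

lemma sq_capped_mono: "\<bar>y\<bar> \<le> \<bar>y'\<bar> \<Longrightarrow> sq_capped t y \<le> sq_capped t y'"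
  unfolding sq_capped_def by (simp add: abs_le_square_iff)

lemma square_add_le_quartic: "(b + z)^2 \<le> 2 * b^2 + 2 + 2 * z^4" for b z :: real
proof -
  have "(b + z)^2 \<le> 2 * b^2 + 2 * z^2"
    using zero_le_power2[of "b - z"] by (simp add: power2_eq_square algebra_simps)
  moreover have "2 * z^2 \<le> 1 + z^4"
    using zero_le_power2[of "z^2 - 1"] by (simp add: power2_eq_square power4_eq_xxxx algebra_simps)
  ultimately show ?thesis
    using zero_le_power2[of z] by linarith
qed

lemma fourth_power_add_le: "(b + z)^4 \<le> 8 * b^4 + 8 * z^4" for b z :: real
proof -
  have "(b + z)^2 \<le> 2 * b^2 + 2 * z^2"
    using zero_le_power2[of "b - z"] by (simp add: power2_eq_square algebra_simps)
  then have "((b + z)^2)^2 \<le> (2 * b^2 + 2 * z^2)^2"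
    by (intro power_mono) auto
  also have "\<dots> \<le> 8 * b^4 + 8 * z^4"
    using zero_le_power2[of "b^2 - z^2"] by (simp add: power2_eq_square power4_eq_xxxx algebra_simps)
  finally show ?thesis by simp
qed

lemma integrable_std_normal_sq_excess: "integrable lborel (\<lambda>z. \<phi> z * sq_excess t (b + z))"
  using square_add_le_quartic[of b] sq_excess_nonneg[of t] sq_excess_le[of t]
  by (intro integrable_std_normal_mult_quartic_bounded[where A = "2 * b^2 + 2" and B = 2])
    (auto intro: order_trans)

lemma integrable_std_normal_sq_capped: "integrable lborel (\<lambda>z. \<phi> z * sq_capped t (b + z))"
  using sq_capped_bounds[of t]
  by (intro integrable_std_normal_mult_quartic_bounded[where A = "t^2" and B = 0]) auto

lemma integrable_std_normal_sq_excess_diff_square: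
  "integrable lborel (\<lambda>z. \<phi> z * (sq_excess t (b + z) - c)^2)"
proof (rule integrable_std_normal_mult_quartic_bounded[where A = "2 * c^2 + 16 * b^4" and B = 16])
  fix z
  have "(sq_excess t (b + z) - c)^2 \<le> 2 * (sq_excess t (b + z))^2 + 2 * c^2"
    using zero_le_power2[of "sq_excess t (b + z) + c"] by (simp add: power2_eq_square algebra_simps)
  also have "(sq_excess t (b + z))^2 \<le> ((b + z)^2)^2"
    using sq_excess_nonneg sq_excess_le by (intro power_mono) auto
  finally show "\<bar>(sq_excess t (b + z) - c)^2\<bar> \<le> 2 * c^2 + 16 * b^4 + 16 * z^4"
    using fourth_power_add_le[of b z] by simp
qed simp

lemma integral_std_normal_sq_excess:
  "(\<integral>z. \<phi> z * sq_excess t (b + z) \<partial>lborel) = b^2 + 1 - (\<integral>z. \<phi> z * sq_capped t (b + z) \<partial>lborel)"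
proof -
  have "(\<integral>z. \<phi> z * sq_excess t (b + z) \<partial>lborel)
      = (\<integral>z. \<phi> z * (b + z)^2 - \<phi> z * sq_capped t (b + z) \<partial>lborel)"
    by (simp add: sq_excess_eq_sq_minus_capped algebra_simps)
  also have "\<dots> = b^2 + 1 - (\<integral>z. \<phi> z * sq_capped t (b + z) \<partial>lborel)"
    using has_bochner_integral_std_normal_shift_square[of b] integrable_std_normal_sq_capped
    by (simp add: has_bochner_integral_iff)
  finally show ?thesis .
qed

lemma integral_std_normal_sq_capped_bounds:
  "0 \<le> (\<integral>z. \<phi> z * sq_capped t (b + z) \<partial>lborel)"
  "(\<integral>z. \<phi> z * sq_capped t (b + z) \<partial>lborel) \<le> t^2"
proof -
  show "0 \<le> (\<integral>z. \<phi> z * sq_capped t (b + z) \<partial>lborel)"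
    by (simp add: Bochner_Integration.integral_nonneg sq_capped_bounds)
  have "(\<integral>z. \<phi> z * sq_capped t (b + z) \<partial>lborel) \<le> (\<integral>z. \<phi> z * t^2 \<partial>lborel)"
    using integrable_std_normal_sq_capped
    by (intro integral_mono) (auto simp: sq_capped_bounds mult_left_mono)
  then show "(\<integral>z. \<phi> z * sq_capped t (b + z) \<partial>lborel) \<le> t^2"
    by simp
qed

lemma std_normal_sq_excess_bias_le:
  "\<bar>(\<integral>z. \<phi> z * sq_excess t (a + z) \<partial>lborel) - (\<integral>z. \<phi> z * sq_excess t z \<partial>lborel) - a^2\<bar>
    \<le> min (a^2) (t^2)"
proof -
  have "(\<integral>z. \<phi> z * sq_excess t z \<partial>lborel) \<le> (\<integral>z. \<phi> z * sq_excess t (a + z) \<partial>lborel)"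
    by (rule std_normal_integral_le_shift)
      (auto simp: sq_excess_mono integrable_std_normal_sq_excess)
  moreover have "(\<integral>z. \<phi> z * sq_capped t z \<partial>lborel) \<le> (\<integral>z. \<phi> z * sq_capped t (a + z) \<partial>lborel)"
    by (rule std_normal_integral_le_shift)
      (auto simp: sq_capped_mono integrable_std_normal_sq_capped)
  ultimately show ?thesis
    using integral_std_normal_sq_excess[of t a] integral_std_normal_sq_excess[of t 0]
      integral_std_normal_sq_capped_bounds[of t a] integral_std_normal_sq_capped_bounds[of t 0]
    by (simp add: abs_le_iff min_def)
qed

section \<open>A Mills-ratio bound\<close>

text \<open>
  This primitive encodes \<open>\<integral>\<^sub>t\<^sup>\<infinity> (z\<^sup>2 - t\<^sup>2) \<phi> z dz = t \<phi> t - (t\<^sup>2 - 1) (1 - \<Phi> t)\<close>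
  combined with the Mills-ratio bound \<open>1 - \<Phi> t \<ge> \<phi> t (1/t - 1/t\<^sup>3)\<close>.
\<close>
definition mills_primitive :: "real \<Rightarrow> real \<Rightarrow> real" where
  "mills_primitive t z = - \<phi> z * (z + (1 - t^2) / z + (t^2 - 1) / z^3)"

lemma has_real_derivative_std_normal_density: "(\<phi> has_real_derivative - z * \<phi> z) (at z)"
proof -
  have "((\<lambda>z. 1 / sqrt (2 * pi) * exp (- z\<^sup>2 / 2)) has_real_derivative
      1 / sqrt (2 * pi) * (exp (- z\<^sup>2 / 2) * (- z))) (at z)"
    by (intro DERIV_cmult) (auto intro!: derivative_eq_intros)
  then show ?thesis
    by (simp add: std_normal_density_def[abs_def] std_normal_density_def mult.commute)
qed

lemma has_real_derivative_mills_primitive: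
  assumes "0 < z"
  shows "(mills_primitive t has_real_derivative \<phi> z * (z^2 - t^2 + 3 * (t^2 - 1) / z^4)) (at z)"
proof -
  define h where "h = (\<lambda>z. z + (1 - t^2) / z + (t^2 - 1) / z^3)"
  define h' where "h' = 1 - (1 - t^2) / z^2 - 3 * (t^2 - 1) / z^4"
  have "(h has_real_derivative h') (at z)"
    unfolding h_def h'_def using assms
    by (auto intro!: derivative_eq_intros simp: field_simps power2_eq_square power3_eq_cube power4_eq_xxxx)
  then have "((\<lambda>z. - (\<phi> z * h z)) has_real_derivative - (- z * \<phi> z * h z + h' * \<phi> z)) (at z)"
    by (intro DERIV_minus DERIV_mult has_real_derivative_std_normal_density)
  moreover have "- (- z * \<phi> z * h z + h' * \<phi> z) = \<phi> z * (z^2 - t^2 + 3 * (t^2 - 1) / z^4)"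
    unfolding h_def h'_def using assms
    by (simp add: field_simps power2_eq_square power3_eq_cube power4_eq_xxxx)
  ultimately show ?thesis
    by (simp add: mills_primitive_def[abs_def] h_def)
qed

lemma mills_primitive_tendsto: "(mills_primitive t \<longlongrightarrow> 0) at_top"
  unfolding mills_primitive_def[abs_def] std_normal_density_def by real_asymp

lemma has_bochner_integral_mills:
  assumes "1 \<le> t"
  shows "has_bochner_integral lborel
    (\<lambda>z. indicator {t..} z * (\<phi> z * (z^2 - t^2 + 3 * (t^2 - 1) / z^4))) (\<phi> t * (2 / t - 1 / t^3))"
proof -
  have "has_bochner_integral lborel
      (\<lambda>z. indicator {t..} z * (\<phi> z * (z^2 - t^2 + 3 * (t^2 - 1) / z^4))) (0 - mills_primitive t t)"
  proof (rule has_bochner_integral_FTC_atLeast[OF _ has_real_derivative_mills_primitive _ mills_primitive_tendsto])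
    fix z assume "t \<le> z"
    then have "t^2 \<le> z^2" and "0 \<le> 3 * (t^2 - 1) / z^4"
      using assms by (auto intro: power_mono simp: one_le_power)
    then show "0 \<le> \<phi> z * (z^2 - t^2 + 3 * (t^2 - 1) / z^4)"
      by simp
  qed (use assms in auto)
  moreover have "0 - mills_primitive t t = \<phi> t * (2 / t - 1 / t^3)"
    unfolding mills_primitive_def using assms
    by (simp add: field_simps power2_eq_square power3_eq_cube)
  ultimately show ?thesis by simp
qed

lemma integral_std_normal_sq_excess_le:
  assumes "1 \<le> t"
  shows "(\<integral>z. \<phi> z * sq_excess t z \<partial>lborel) \<le> 4 * \<phi> t / t"
proof -
  define k where "k z = \<phi> z * (z^2 - t^2 + 3 * (t^2 - 1) / z^4)" for z
  have k_ge: "\<phi> z * sq_excess t z \<le> k z" and k_nonneg: "0 \<le> k z" if "t \<le> z" for z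
  proof -
    have "t^2 \<le> z^2" and "0 \<le> 3 * (t^2 - 1) / z^4"
      using assms that by (auto intro: power_mono simp: one_le_power)
    moreover have "sq_excess t z = z^2 - t^2"
      using assms that by (intro sq_excess_eq) auto
    ultimately show "\<phi> z * sq_excess t z \<le> k z" and "0 \<le> k z"
      by (simp_all add: k_def mult_left_mono)
  qed
  have "(\<integral>z. \<phi> z * sq_excess t z \<partial>lborel) \<le> \<phi> t * (2 / t - 1 / t^3) + \<phi> t * (2 / t - 1 / t^3)"
  proof (rule integral_le_two_tails)
    show "integrable lborel (\<lambda>z. \<phi> z * sq_excess t z)"
      using integrable_std_normal_sq_excess[of t 0] by simp
    show "has_bochner_integral lborel (\<lambda>z. indicator {t..} z * k z) (\<phi> t * (2 / t - 1 / t^3))"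
      unfolding k_def by (rule has_bochner_integral_mills[OF assms])
    show "\<phi> (- z) * sq_excess t (- z) \<le> k z" if "t \<le> z" for z
      using k_ge[OF that] by (simp add: sq_excess_uminus std_normal_density_def)
    show "\<phi> z * sq_excess t z \<le> 0" if "\<bar>z\<bar> < t" for z
      using that assms by (simp add: sq_excess_eq_zero)
  qed (use k_ge k_nonneg has_bochner_integral_mills[OF assms] in \<open>auto simp: k_def\<close>)
  also have "\<dots> \<le> 4 * \<phi> t / t"
    using assms by (simp add: field_simps)
  finally show ?thesis .
qed

section \<open>Gaussian tails by exponential tilting\<close>

definition tilt_primitive :: "real \<Rightarrow> real \<Rightarrow> real" where
  "tilt_primitive t y = - exp (- (t * y)) *
     ((y^2 - t^2)^2 / t + (4 * y^3 - 4 * t^2 * y) / t^2 + (12 * y^2 - 4 * t^2) / t^3 + 24 * y / t^4 + 24 / t^5)"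

lemma has_real_derivative_tilt_primitive:
  fixes t y :: real
  assumes "0 < t"
  shows "(tilt_primitive t has_real_derivative exp (- (t * y)) * (y^2 - t^2)^2) (at y)"
proof -
  define R where "R = (\<lambda>y. (y^2 - t^2)^2 / t + (4 * y^3 - 4 * t^2 * y) / t^2
      + (12 * y^2 - 4 * t^2) / t^3 + 24 * y / t^4 + 24 / t^5)"
  define R' where "R' = (4 * y^3 - 4 * t^2 * y) / t + (12 * y^2 - 4 * t^2) / t^2 + 24 * y / t^3 + 24 / t^4"
  have "(R has_real_derivative R') (at y)"
    unfolding R_def R'_def using assms
    by (auto intro!: derivative_eq_intros simp: field_simps power2_eq_square power3_eq_cube power4_eq_xxxx)
  then have "((\<lambda>y. - (exp (- (t * y)) * R y)) has_real_derivative
      - (exp (- (t * y)) * (- t) * R y + R' * exp (- (t * y)))) (at y)"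
    by (intro DERIV_minus DERIV_mult) (auto intro!: derivative_eq_intros)
  moreover have "- (exp (- (t * y)) * (- t) * R y + R' * exp (- (t * y))) = exp (- (t * y)) * (t * R y - R')"
    by (simp add: algebra_simps)
  moreover have "t * R y - R' = (y^2 - t^2)^2"
    unfolding R_def R'_def using assms
    by (simp add: field_simps power2_eq_square power3_eq_cube power4_eq_xxxx eval_nat_numeral)
  ultimately show ?thesis
    by (simp add: tilt_primitive_def[abs_def] R_def)
qed

lemma tilt_primitive_tendsto: "0 < t \<Longrightarrow> (tilt_primitive t \<longlongrightarrow> 0) at_top" for t :: real
  unfolding tilt_primitive_def[abs_def] by real_asymp

lemma has_bochner_integral_tilt:
  fixes t :: real
  assumes "0 < t"
  shows "has_bochner_integral lborel (\<lambda>y. indicator {t..} y * (exp (- (t * y)) * (y^2 - t^2)^2))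
    (exp (- (t^2)) * (8 / t + 24 / t^3 + 24 / t^5))"
proof -
  have "has_bochner_integral lborel (\<lambda>y. indicator {t..} y * (exp (- (t * y)) * (y^2 - t^2)^2))
      (0 - tilt_primitive t t)"
    by (rule has_bochner_integral_FTC_atLeast[OF _ has_real_derivative_tilt_primitive _
          tilt_primitive_tendsto]) (use assms in auto)
  moreover have "0 - tilt_primitive t t = exp (- (t^2)) * (8 / t + 24 / t^3 + 24 / t^5)"
    unfolding tilt_primitive_def using assms
    by (simp add: field_simps power2_eq_square power3_eq_cube power4_eq_xxxx eval_nat_numeral)
  ultimately show ?thesis by simp
qed

lemma normal_density_le_exp_tilt:
  "normal_density a 1 y \<le> \<phi> 0 * exp (t^2 / 2) * exp (t * a) * exp (- (t * y))"
proof -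
  have "- ((y - a)^2) / 2 \<le> t^2 / 2 + t * a - t * y"
    using zero_le_power2[of "y - a - t"] by (simp add: power2_eq_square field_simps)
  then have "exp (- ((y - a)^2) / 2) \<le> exp (t^2 / 2) * exp (t * a) * exp (- (t * y))"
    by (simp flip: exp_add)
  then show ?thesis
    by (simp add: normal_density_def std_normal_density_def mult.assoc divide_right_mono)
qed

lemma integral_std_normal_sq_excess_square_le:
  assumes "0 < t"
  shows "(\<integral>z. \<phi> z * (sq_excess t (a + z))^2 \<partial>lborel)
    \<le> 2 * \<phi> 0 * cosh (t * a) * exp (- (t^2) / 2) * (8 / t + 24 / t^3 + 24 / t^5)"
proof -
  define C where "C = \<phi> 0 * exp (t^2 / 2)"
  define J where "J = exp (- (t^2)) * (8 / t + 24 / t^3 + 24 / t^5)"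
  define k where "k b y = C * exp (t * b) * (exp (- (t * y)) * (y^2 - t^2)^2)" for b y
  have k: "has_bochner_integral lborel (\<lambda>y. indicator {t..} y * k b y) (C * exp (t * b) * J)" for b
    using has_bochner_integral_mult_right[OF has_bochner_integral_tilt[OF assms], of "C * exp (t * b)"]
    by (simp add: k_def J_def ac_simps)
  have k_bound: "normal_density b 1 y * (sq_excess t y)^2 \<le> k b y" and k_nonneg: "0 \<le> k b y"
    if "t \<le> y" for b y
  proof -
    have "sq_excess t y = y^2 - t^2"
      using assms that by (intro sq_excess_eq) auto
    then show "normal_density b 1 y * (sq_excess t y)^2 \<le> k b y"
      unfolding k_def C_def
      using mult_right_mono[OF normal_density_le_exp_tilt[of b y t] zero_le_power2[of "y^2 - t^2"]]
      by (simp add: mult.assoc)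
    show "0 \<le> k b y" by (simp add: k_def C_def)
  qed
  have "(\<integral>z. \<phi> z * (sq_excess t (a + z))^2 \<partial>lborel) = (\<integral>y. normal_density a 1 y * (sq_excess t y)^2 \<partial>lborel)"
    by (rule integral_normal_density_shift[symmetric])
  also have "\<dots> \<le> C * exp (t * a) * J + C * exp (t * (- a)) * J"
  proof (rule integral_le_two_tails[OF _ k k])
    show "integrable lborel (\<lambda>y. normal_density a 1 y * (sq_excess t y)^2)"
      using integrable_normal_density_shift_iff[of a "\<lambda>y. (sq_excess t y)^2"]
        integrable_std_normal_sq_excess_diff_square[of t a 0] by simp
    show "normal_density a 1 (- y) * (sq_excess t (- y))^2 \<le> k (- a) y" if "t \<le> y" for y
      using k_bound[OF that, of "- a"] normal_density_uminus[of "- a" 1 y]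
      by (simp add: sq_excess_uminus)
    show "normal_density a 1 y * (sq_excess t y)^2 \<le> 0" if "\<bar>y\<bar> < t" for y
      using that assms by (simp add: sq_excess_eq_zero)
  qed (use k_bound k_nonneg in auto)
  also have "\<dots> = 2 * \<phi> 0 * cosh (t * a) * exp (- (t^2) / 2) * (8 / t + 24 / t^3 + 24 / t^5)"
  proof -
    have "exp (t^2 / 2) * exp (- (t^2)) = exp (- (t^2) / 2)"
      by (simp flip: exp_add)
    then show ?thesis
      unfolding C_def J_def cosh_def by (simp add: algebra_simps)
  qed
  finally show ?thesis .
qed

lemma cosh_sub_one_le_sq_ratio:
  fixes x X :: real
  assumes "0 \<le> x" "x \<le> X" "0 < X"
  shows "cosh x - 1 \<le> (x / X)^2 * (cosh X - 1)"
proof -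
  define u where "u = (\<lambda>(y::real) n. (if even n then y^n / fact n else 0) - (if n = 0 then 1 else 0))"
  have u_sums: "u y sums (cosh y - 1)" for y
  proof -
    have "(\<lambda>n. if even n then y^n /\<^sub>R fact n else 0) = (\<lambda>n. if even n then y^n / fact n else 0)"
      by (rule ext) (simp add: field_simps)
    then have "(\<lambda>n. if even n then y^n / fact n else 0) sums cosh y"
      using cosh_converges[of y] by simp
    from sums_diff[OF this sums_single[of 0 "\<lambda>_. 1::real"]] show ?thesis
      by (simp add: u_def)
  qed
  have "u x n \<le> (x / X)^2 * u X n" for n
  proof (cases "even n \<and> n \<noteq> 0")
    case True
    then have m: "n = Suc (Suc (n - 2))"
      by presburger
    have "x^n = x^2 * x^(n - 2)"
      by (subst m) (simp add: power2_eq_square)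
    also have "\<dots> \<le> x^2 * X^(n - 2)"
      using assms by (intro mult_left_mono power_mono) auto
    also have "\<dots> = (x / X)^2 * X^n"
      using assms by (subst (2) m) (simp add: power2_eq_square field_simps)
    finally show ?thesis
      using True by (simp add: u_def divide_right_mono)
  next
    case False
    then show ?thesis
      by (cases "n = 0") (simp_all add: u_def)
  qed
  then show ?thesis
    by (rule sums_le[OF _ u_sums sums_mult[OF u_sums]])
qed

lemma std_normal_density_zero_le: "\<phi> 0 \<le> 2 / 5"
proof -
  have "(5 / 2)^2 \<le> 2 * pi"
    using pi_approx(1) by (simp add: power2_eq_square)
  then have "5 / 2 \<le> sqrt (2 * pi)"
    by (rule real_le_rsqrt)
  then show ?thesis
    unfolding std_normal_density_def by (simp add: field_simps)
qed

lemma tilt_factor_le: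
  fixes t :: real
  assumes "3 \<le> t^2" "1 \<le> t"
  shows "8 / t + 24 / t^3 + 24 / t^5 \<le> 56 / (3 * t)"
proof -
  have "9 \<le> t^4"
    using power_mono[OF assms(1), of 2] by (simp flip: power_mult)
  then have "24 / t^3 \<le> 8 / t" and "24 / t^5 \<le> 8 / (3 * t)"
    using assms by (simp_all add: field_simps power3_eq_cube power2_eq_square power4_eq_xxxx eval_nat_numeral)
  then have "8 / t + 24 / t^3 + 24 / t^5 \<le> 8 / t + 8 / t + 8 / (3 * t)"
    by linarith
  also have "\<dots> = 56 / (3 * t)"
    using assms by (simp add: field_simps)
  finally show ?thesis .
qed

lemma cosh_le_of_abs_le:
  fixes a s t :: real
  assumes "\<bar>a\<bar> \<le> s" "0 < s" "0 < t"
  shows "cosh (t * a) \<le> 1 + a^2 / s^2 * exp (t * s) / 2"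
proof -
  have "cosh (t * a) = cosh (t * \<bar>a\<bar>)"
    by (metis abs_mult abs_of_pos assms(3) cosh_real_abs)
  also have "\<dots> \<le> 1 + ((t * \<bar>a\<bar>) / (t * s))^2 * (cosh (t * s) - 1)"
    using cosh_sub_one_le_sq_ratio[of "t * \<bar>a\<bar>" "t * s"] assms by (simp add: mult_left_mono)
  also have "((t * \<bar>a\<bar>) / (t * s))^2 = a^2 / s^2"
    using assms by (simp add: power_divide power_mult_distrib)
  also have "cosh (t * s) - 1 \<le> exp (t * s) / 2"
  proof -
    have "exp (- (t * s)) \<le> 1"
      using assms by simp
    then show ?thesis
      unfolding cosh_field_def add_divide_distrib by linarith
  qed
  then have "1 + a^2 / s^2 * (cosh (t * s) - 1) \<le> 1 + a^2 / s^2 * (exp (t * s) / 2)"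
    by (intro add_left_mono mult_left_mono) auto
  finally show ?thesis by simp
qed

lemma exp_tilt_le:
  fixes t :: real
  assumes "1.732 \<le> t"
  shows "exp (t * sqrt (3 / 2) - t^2 / 2) \<le> 2.015625"
proof -
  define s :: real where "s = sqrt (3 / 2)"
  have "s \<le> 1.2248"
    unfolding s_def by (rule real_le_lsqrt) (auto simp: power2_eq_square)
  then have "0.5^2 \<le> (t - s)^2"
    using assms by (intro power_mono) auto
  then have "t * s - t^2 / 2 \<le> 5 / 8"
    by (simp add: s_def power2_eq_square algebra_simps)
  then have "exp (t * s - t^2 / 2) \<le> exp (5 / 8)"
    by simp
  also have "\<dots> \<le> 1 + 5 / 8 + (5 / 8)^2"
    by (rule exp_bound) auto
  finally show ?thesis
    by (simp add: s_def power2_eq_square)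
qed

lemma tilt_bound_le_variance_bound:
  fixes t a :: real
  assumes "3 \<le> t^2" "1 \<le> t" "a^2 \<le> 3 / 2"
  shows "2 * \<phi> 0 * cosh (t * a) * exp (- (t^2) / 2) * (8 / t + 24 / t^3 + 24 / t^5)
    \<le> 6 * a^2 + (4 * t + 18) * exp (- (t^2) / 2)"
proof -
  define s :: real where "s = sqrt (3 / 2)"
  define E where "E = exp (- (t^2) / 2)"
  have "1.732 \<le> t"
    using power2_le_imp_le[of "1.732" t] assms by (simp add: power2_eq_square)
  have "0 < s" "s^2 = 3 / 2" "\<bar>a\<bar> \<le> s"
    using assms(3) by (auto simp: s_def real_le_rsqrt)
  then have cosh_le: "cosh (t * a) \<le> 1 + a^2 * exp (t * s) / 3"
    using cosh_le_of_abs_le[of a s t] assms by simp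
  have exp_le: "exp (t * s) * E \<le> 2.015625"
    using exp_tilt_le[OF \<open>1.732 \<le> t\<close>] by (simp add: E_def s_def flip: exp_add)
  have "0 < E" "0 \<le> 8 / t + 24 / t^3 + 24 / t^5"
    using assms by (simp_all add: E_def)
  then have "2 * \<phi> 0 * cosh (t * a) * E * (8 / t + 24 / t^3 + 24 / t^5)
      \<le> (4 / 5) * (1 + a^2 * exp (t * s) / 3) * E * (56 / (3 * t))"
    using std_normal_density_zero_le cosh_le tilt_factor_le[OF assms(1,2)]
    by (intro mult_mono) auto
  also have "\<dots> = 224 / (15 * t) * E + 224 / (45 * t) * a^2 * (exp (t * s) * E)"
    using assms by (simp add: field_simps)
  also have "224 / (15 * t) * E \<le> (4 * t + 18) * E"
  proof -
    have "224 / (15 * t) \<le> 224 / 15"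
      using assms by (simp add: field_simps)
    then show ?thesis
      using assms \<open>0 < E\<close> by (intro mult_right_mono) auto
  qed
  also have "224 / (45 * t) * a^2 * (exp (t * s) * E) \<le> 224 / (45 * 1.732) * a^2 * 2.015625"
    using exp_le \<open>1.732 \<le> t\<close> \<open>0 < E\<close> by (intro mult_mono) (auto simp: field_simps)
  also have "\<dots> \<le> 6 * a^2"
    by simp
  finally show ?thesis
    by (simp add: E_def)
qed

lemma lipschitz_bound_le_variance_bound:
  fixes t a :: real
  assumes "1 \<le> t" and "3 / 2 \<le> a^2 \<or> t^2 \<le> 3"
  shows "4 * a^2 + 3 \<le> 6 * a^2 + (4 * t + 18) * exp (- (t^2) / 2)"
proof (cases "3 / 2 \<le> a^2")
  case True
  then show ?thesis
    using assms(1) by (simp add: add_increasing2)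
next
  case False
  then have "t^2 \<le> 3"
    using assms(2) by simp
  have "exp (3 / 4 :: real) \<le> 1 + 3 / 4 + (3 / 4)^2"
    by (rule exp_bound) auto
  then have "exp (3 / 4 :: real)^2 \<le> (1 + 3 / 4 + (3 / 4)^2)^2"
    by (intro power_mono) auto
  then have "exp (3 / 2 :: real) \<le> 22 / 3"
    by (simp add: power2_eq_square flip: exp_add)
  then have "3 \<le> 22 * exp (- (3 / 2) :: real)"
    by (simp add: exp_minus field_simps)
  also have "\<dots> \<le> (4 * t + 18) * exp (- (t^2) / 2)"
    using assms(1) \<open>t^2 \<le> 3\<close> by (intro mult_mono) auto
  finally show ?thesis
    using zero_le_power2[of a] by linarith
qed

lemma std_normal_sq_excess_variance_le:
  fixes t a :: real
  assumes "1 \<le> t"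
  shows "(\<integral>z. \<phi> z * (sq_excess t (a + z) - (\<integral>y. \<phi> y * sq_excess t (a + y) \<partial>lborel))^2 \<partial>lborel)
    \<le> 6 * a^2 + (4 * t + 18) * exp (- (t^2) / 2)"
proof -
  have "has_bochner_integral lborel \<phi> 1"
    using has_bochner_integral_integrable[of lborel \<phi>] by simp
  note mean_square_le = mean_square_about_mean_le[OF this
      integrable_std_normal_sq_excess[of t a] integrable_std_normal_sq_excess_diff_square[of t a]]
  show ?thesis
  proof (cases "3 / 2 \<le> a^2 \<or> t^2 \<le> 3")
    case True
    have "(sq_excess t (a + z) - sq_excess t a)^2 \<le> ((a + z)^2 - a^2)^2" for z
      using abs_pos_part_diff_le[of "(a + z)^2 - t^2" "a^2 - t^2"]
      by (simp add: sq_excess_def abs_le_square_iff)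
    then have "(\<integral>z. \<phi> z * (sq_excess t (a + z) - sq_excess t a)^2 \<partial>lborel)
        \<le> (\<integral>z. \<phi> z * ((a + z)^2 - a^2)^2 \<partial>lborel)"
      using integrable_std_normal_sq_excess_diff_square has_bochner_integral_std_normal_shift_square_diff
      by (intro integral_mono) (auto simp: has_bochner_integral_iff mult_left_mono)
    also have "\<dots> = 4 * a^2 + 3"
      using has_bochner_integral_std_normal_shift_square_diff by (simp add: has_bochner_integral_iff)
    also have "\<dots> \<le> 6 * a^2 + (4 * t + 18) * exp (- (t^2) / 2)"
      using lipschitz_bound_le_variance_bound[OF assms True] .
    finally show ?thesis
      using mean_square_le[where c = "sq_excess t a"] by linarith
  next
    case False
    then have "3 \<le> t^2" "a^2 \<le> 3 / 2"
      by auto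
    have "(\<integral>z. \<phi> z * (sq_excess t (a + z) - 0)^2 \<partial>lborel)
        \<le> 2 * \<phi> 0 * cosh (t * a) * exp (- (t^2) / 2) * (8 / t + 24 / t^3 + 24 / t^5)"
      using integral_std_normal_sq_excess_square_le[of t a] assms by simp
    also have "\<dots> \<le> 6 * a^2 + (4 * t + 18) * exp (- (t^2) / 2)"
      using tilt_bound_le_variance_bound[OF \<open>3 \<le> t^2\<close> assms \<open>a^2 \<le> 3 / 2\<close>] .
    finally show ?thesis
      using mean_square_le[where c = 0] by linarith
  qed
qed

section \<open>Rescaling to \<open>N(\<theta>, 1/n)\<close>\<close>

lemma normal_density_affine: "0 < \<sigma> \<Longrightarrow> normal_density \<mu> \<sigma> (\<mu> + \<sigma> * z) = \<phi> z / \<sigma>"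
  unfolding normal_density_def std_normal_density_def
  by (simp add: real_sqrt_mult power_mult_distrib field_simps)

lemma integral_normal_law:
  fixes h :: "real \<Rightarrow> real"
  assumes n: "0 < n" and [measurable]: "h \<in> borel_measurable borel"
  shows "(\<integral>x. h x \<partial>normal_law \<theta> n) = (\<integral>z. \<phi> z * h (\<theta> + z / sqrt n) \<partial>lborel)"
proof -
  define \<sigma> where "\<sigma> = 1 / sqrt n"
  have "0 < \<sigma>" unfolding \<sigma>_def using n by simp
  have "(\<integral>x. h x \<partial>normal_law \<theta> n) = (\<integral>x. normal_density \<theta> \<sigma> x * h x \<partial>lborel)"
    unfolding normal_law_def \<sigma>_def by (subst integral_density) auto
  also have "\<dots> = \<sigma> * (\<integral>z. normal_density \<theta> \<sigma> (\<theta> + \<sigma> * z) * h (\<theta> + \<sigma> * z) \<partial>lborel)"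
    using lborel_integral_real_affine[of \<sigma> "\<lambda>x. normal_density \<theta> \<sigma> x * h x" \<theta>] \<open>0 < \<sigma>\<close> by simp
  also have "\<dots> = (\<integral>z. \<phi> z * h (\<theta> + \<sigma> * z) \<partial>lborel)"
    using \<open>0 < \<sigma>\<close> by (simp add: normal_density_affine)
  also have "\<dots> = (\<integral>z. \<phi> z * h (\<theta> + z / sqrt n) \<partial>lborel)"
    by (simp add: \<sigma>_def)
  finally show ?thesis .
qed

lemma integral_normal_law_pos_part:
  fixes h :: "real \<Rightarrow> real"
  assumes "0 < n" "0 \<le> \<tau>" and [measurable]: "h \<in> borel_measurable borel"
  shows "(\<integral>x. h (pos_part (x^2 - \<tau> / n)) \<partial>normal_law \<theta> n)
    = (\<integral>z. \<phi> z * h (sq_excess (sqrt \<tau>) (\<theta> * sqrt n + z) / n) \<partial>lborel)"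
proof -
  have "pos_part ((\<theta> + z / sqrt n)^2 - \<tau> / n) = sq_excess (sqrt \<tau>) (\<theta> * sqrt n + z) / n" for z
  proof -
    have "(\<theta> + z / sqrt n)^2 - \<tau> / n = ((\<theta> * sqrt n + z)^2 - (sqrt \<tau>)^2) / n"
      using assms by (simp add: power2_eq_square field_simps)
    then show ?thesis
      using pos_part_divide[OF assms(1)] by (simp add: sq_excess_def)
  qed
  moreover have "(\<lambda>x. h (pos_part (x^2 - \<tau> / n))) \<in> borel_measurable borel"
    by measurable
  ultimately show ?thesis
    using integral_normal_law[OF assms(1), of "\<lambda>x. h (pos_part (x^2 - \<tau> / n))" \<theta>] by simp
qed

lemma normal_law_pos_part_moments:
  fixes n \<tau> \<theta> c :: real
  assumes "0 < n" "0 \<le> \<tau>"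
  defines "X \<equiv> \<lambda>z. sq_excess (sqrt \<tau>) (\<theta> * sqrt n + z)"
  shows "(\<integral>x. pos_part (x^2 - \<tau> / n) - c \<partial>normal_law \<theta> n) = (\<integral>z. \<phi> z * X z \<partial>lborel) / n - c"
    and "(\<integral>x. (pos_part (x^2 - \<tau> / n) - c)^2 \<partial>normal_law \<theta> n)
      = (\<integral>z. \<phi> z * (X z - n * c)^2 \<partial>lborel) / n^2"
proof -
  have "integrable lborel (\<lambda>z. \<phi> z * X z)"
    unfolding X_def by (rule integrable_std_normal_sq_excess)
  then show "(\<integral>x. pos_part (x^2 - \<tau> / n) - c \<partial>normal_law \<theta> n) = (\<integral>z. \<phi> z * X z \<partial>lborel) / n - c"
    using integral_normal_law_pos_part[OF assms(1,2), of "\<lambda>u. u - c" \<theta>]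
    by (simp add: X_def right_diff_distrib Bochner_Integration.integral_diff)
  have "X z / n - c = (X z - n * c) / n" for z
    using assms(1) by (simp add: field_simps)
  then have "(X z / n - c)^2 = (X z - n * c)^2 / n^2" for z
    by (simp add: power_divide)
  then show "(\<integral>x. (pos_part (x^2 - \<tau> / n) - c)^2 \<partial>normal_law \<theta> n)
      = (\<integral>z. \<phi> z * (X z - n * c)^2 \<partial>lborel) / n^2"
    using integral_normal_law_pos_part[OF assms(1,2), of "\<lambda>u. (u - c)^2" \<theta>] by (simp add: X_def)
qed

lemma normal_law_pos_part_null_mean_le:
  fixes n \<tau> :: real
  assumes "0 < n" "1 \<le> \<tau>"
  defines "P \<equiv> \<lambda>x. pos_part (x^2 - \<tau> / n)"
  shows "\<bar>\<integral>x. P x \<partial>normal_law 0 n\<bar> \<le> 4 / (sqrt (2 * pi) * n * sqrt \<tau> * exp (\<tau> / 2))"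
proof -
  define m where "m = (\<integral>z. \<phi> z * sq_excess (sqrt \<tau>) z \<partial>lborel)"
  have "0 \<le> m"
    by (simp add: m_def Bochner_Integration.integral_nonneg sq_excess_nonneg)
  moreover have "(\<integral>x. P x \<partial>normal_law 0 n) = m / n"
    using normal_law_pos_part_moments(1)[of n \<tau> 0 0] assms by (simp add: P_def m_def)
  ultimately have "\<bar>\<integral>x. P x \<partial>normal_law 0 n\<bar> \<le> 4 * \<phi> (sqrt \<tau>) / sqrt \<tau> / n"
    using divide_right_mono[OF integral_std_normal_sq_excess_le[of "sqrt \<tau>"], of n] assms
    by (simp add: m_def)
  also have "\<dots> = 4 / (sqrt (2 * pi) * n * sqrt \<tau> * exp (\<tau> / 2))"
    using assms by (simp add: std_normal_density_def exp_minus field_simps)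
  finally show ?thesis .
qed

lemma normal_law_pos_part_bias_le:
  fixes n \<tau> \<theta> :: real
  assumes "0 < n" "0 \<le> \<tau>"
  defines "P \<equiv> \<lambda>x. pos_part (x^2 - \<tau> / n)"
  shows "\<bar>(\<integral>x. P x \<partial>normal_law \<theta> n) - (\<integral>x. P x \<partial>normal_law 0 n) - \<theta>^2\<bar> \<le> min (\<tau> / n) (\<theta>^2)"
proof -
  define t where "t = sqrt \<tau>"
  define a where "a = \<theta> * sqrt n"
  have "t^2 = \<tau>" "a^2 = n * \<theta>^2"
    using assms by (auto simp: t_def a_def power_mult_distrib)
  have "(\<integral>x. P x \<partial>normal_law \<theta> n) - (\<integral>x. P x \<partial>normal_law 0 n) - \<theta>^2
      = ((\<integral>z. \<phi> z * sq_excess t (a + z) \<partial>lborel) - (\<integral>z. \<phi> z * sq_excess t z \<partial>lborel) - a^2) / n"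
    using normal_law_pos_part_moments(1)[OF assms(1,2), of \<theta> 0]
      normal_law_pos_part_moments(1)[OF assms(1,2), of 0 0] \<open>a^2 = n * \<theta>^2\<close> assms(1)
    by (simp add: P_def t_def a_def diff_divide_distrib)
  also have "\<bar>\<dots>\<bar> \<le> min (a^2) (t^2) / n"
    using std_normal_sq_excess_bias_le[of t a] assms(1) by (simp add: abs_divide divide_right_mono)
  also have "\<dots> = min (\<tau> / n) (\<theta>^2)"
    using \<open>t^2 = \<tau>\<close> \<open>a^2 = n * \<theta>^2\<close> assms(1) by (simp add: min_divide_distrib_right)
  finally show ?thesis .
qed

lemma normal_law_pos_part_variance_le:
  fixes n \<tau> \<theta> :: real
  assumes "0 < n" "1 \<le> \<tau>"
  defines "P \<equiv> \<lambda>x. pos_part (x^2 - \<tau> / n)"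
  shows "(\<integral>x. (P x - (\<integral>y. P y \<partial>normal_law \<theta> n))^2 \<partial>normal_law \<theta> n)
    \<le> 6 * \<theta>^2 / n + (4 * sqrt \<tau> + 18) / (n^2 * exp (\<tau> / 2))"
proof -
  define t where "t = sqrt \<tau>"
  define a where "a = \<theta> * sqrt n"
  define g where "g = (\<integral>z. \<phi> z * sq_excess t (a + z) \<partial>lborel)"
  have "0 \<le> \<tau>" "1 \<le> t" "t^2 = \<tau>" "a^2 = n * \<theta>^2"
    using assms by (auto simp: t_def a_def power_mult_distrib)
  have "(\<integral>y. P y \<partial>normal_law \<theta> n) = g / n"
    using normal_law_pos_part_moments(1)[OF assms(1) \<open>0 \<le> \<tau>\<close>, of \<theta> 0] by (simp add: P_def g_def t_def a_def)
  then have "(\<integral>x. (P x - (\<integral>y. P y \<partial>normal_law \<theta> n))^2 \<partial>normal_law \<theta> n)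
      = (\<integral>z. \<phi> z * (sq_excess t (a + z) - g)^2 \<partial>lborel) / n^2"
    using normal_law_pos_part_moments(2)[OF assms(1) \<open>0 \<le> \<tau>\<close>, of \<theta> "g / n"] assms(1)
    by (simp add: P_def t_def a_def)
  also have "\<dots> \<le> (6 * a^2 + (4 * t + 18) * exp (- (t^2) / 2)) / n^2"
    using std_normal_sq_excess_variance_le[OF \<open>1 \<le> t\<close>, of a] by (simp add: g_def divide_right_mono)
  also have "\<dots> = 6 * \<theta>^2 / n + (4 * sqrt \<tau> + 18) / (n^2 * exp (\<tau> / 2))"
    using \<open>a^2 = n * \<theta>^2\<close> \<open>t^2 = \<tau>\<close> assms(1)
    by (simp add: t_def exp_minus power2_eq_square field_simps)
  finally show ?thesis .
qed

theorem lemma1: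
  fixes n \<tau> \<theta> \<mu>0 :: real and Q :: "real \<Rightarrow> real"
  assumes "n > 0" and "\<tau> \<ge> 1"
    and mu0_def: "\<mu>0 = (\<integral>x. pos_part (x\<^sup>2 - \<tau> / n) \<partial>normal_law 0 n)"
    and Q_def: "\<And>x. Q x = pos_part (x\<^sup>2 - \<tau> / n) - \<mu>0"
  shows "\<bar>\<mu>0\<bar> \<le> 4 / (sqrt (2 * pi) * n * sqrt \<tau> * exp (\<tau> / 2)) \<and>
      \<bar>(\<integral>x. Q x \<partial>normal_law \<theta> n) - \<theta>\<^sup>2\<bar> \<le> min (2 * \<tau> / n) (\<theta>\<^sup>2) \<and>
      (\<integral>x. (Q x - (\<integral>y. Q y \<partial>normal_law \<theta> n))\<^sup>2 \<partial>normal_law \<theta> n)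
           \<le> 6 * \<theta>\<^sup>2 / n + (4 * sqrt \<tau> + 18) / (n\<^sup>2 * exp (\<tau> / 2))"
proof -
  have "0 \<le> \<tau>"
    using assms(2) by simp
  have mean: "(\<integral>x. Q x \<partial>normal_law \<theta> n) = (\<integral>x. pos_part (x\<^sup>2 - \<tau> / n) \<partial>normal_law \<theta> n) - \<mu>0"
    using normal_law_pos_part_moments(1)[OF assms(1) \<open>0 \<le> \<tau>\<close>, of \<theta> \<mu>0]
      normal_law_pos_part_moments(1)[OF assms(1) \<open>0 \<le> \<tau>\<close>, of \<theta> 0]
    by (simp add: Q_def)
  have "\<bar>(\<integral>x. Q x \<partial>normal_law \<theta> n) - \<theta>\<^sup>2\<bar> \<le> min (\<tau> / n) (\<theta>\<^sup>2)"
    using normal_law_pos_part_bias_le[OF assms(1) \<open>0 \<le> \<tau>\<close>, of \<theta>] by (simp add: mean mu0_def)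
  also have "\<dots> \<le> min (2 * \<tau> / n) (\<theta>\<^sup>2)"
    using assms(1) \<open>0 \<le> \<tau>\<close> by (intro min.mono divide_right_mono) auto
  finally have bias: "\<bar>(\<integral>x. Q x \<partial>normal_law \<theta> n) - \<theta>\<^sup>2\<bar> \<le> min (2 * \<tau> / n) (\<theta>\<^sup>2)" .
  have centered: "Q x - (\<integral>y. Q y \<partial>normal_law \<theta> n)
      = pos_part (x\<^sup>2 - \<tau> / n) - (\<integral>y. pos_part (y\<^sup>2 - \<tau> / n) \<partial>normal_law \<theta> n)" for x
    unfolding mean by (simp add: Q_def)
  show ?thesis
    unfolding centered
    using bias normal_law_pos_part_null_mean_le[OF assms(1,2)] normal_law_pos_part_variance_le[OF assms(1,2), of \<theta>]
    by (simp add: mu0_def)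
qed

end
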